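(* Let $\lambda>0$, $p\in(0,1)$, $\theta\in(0,1)$. Let $\rho$ be a random variable taking finitely many values $q_1,\dots,q_K\in[0,M_1]$ (some constant $M_1<\infty$) with $P(\rho=q_j)=\mu_j>0$, $\sum_j\mu_j=1$. For each $n\ge1$ let $G_n$ be the Erdős–Rényi graph $G(n,p)$ on $A_n=\{0,\dots,n-1\}$ ($i\sim j$ if the edge is kept), let $\{\rho(i)\}_{i\ge0}$ be i.i.d. copies of $\rho$ independent of the graphs, and let $\{X^{(n)}_t\}_{t\ge0}$ be the SIR process on $G_n$ with states $\{0,1,-1\}^{A_n}$: state $-1$ is permanent; a vertex $i$ in state $0$ at time $t$ jumps to $1$ at rate $\frac{\lambda}{n}\sum_{j}\rho(i)\rho(j)\mathbf{1}_{\{j\sim i,X_t(j)=1\}}$; a vertex in state $1$ jumps to $-1$ at rate $1$. The initial states $X^{(n)}_0(i)$ are i.i.d. (independent of graph and weights) with $P(X^{(n)}_0(0)=1)=\theta=1-P(X^{(n)}_0(0)=0)$. For $1\le j\le K$ let $S^{(n)}_t(j)=\mathrm{card}\{i: X^{(n)}_t(i)=0,\rho(i)=q_j\}$ and $I^{(n)}_t(j)=\mathrm{card}\{i: X^{(n)}_t(i)=1,\rho(i)=q_j\}$, and for $1\le j,l\le K$ let $L^{(n)}_t(j,l)$ be the number of edges of $G_n$ joining a vertex that is susceptible (state $0$) with weight $q_j$ at time $t$ to a vertex that is infective (state $1$) with weight $q_l$ at time $t$. Then for any $1\le j,l\le K$ and $t\ge0$, $$\lim_{n\to\infty}\frac{\sup_{0\le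 u\le t}\big|L^{(n)}_u(j,l)-p\,S^{(n)}_u(j)\,I^{(n)}_u(l)\big|}{n^2}=0$$ in probability. *)

theory Defs
  imports "HOL-Probability.Probability"
begin

text \<open>An outcome is a tuple (G, w, x0, c):
  G   : edge indicators of G(n,p), G (i,j) for i < j < n (i.i.d. Bernoulli p);
  w   : vertex weights w i = rho(i), i < n (i.i.d. with law D);
  x0  : initial states x0 i, i < n (i.i.d., 1 with prob. theta, 0 otherwise);
  c   : c k = (E_k, U_k), k in nat, with E_k i.i.d. Exp(1) and U_k i.i.d. uniform on [0,1],
        all independent; they drive the standard jump-chain construction of the
        continuous-time Markov chain.\<close>

type_synonym sir_outcome =
  "(nat \<times> nat \<Rightarrow> bool) \<times> (nat \<Rightarrow> real) \<times> (nat \<Rightarrow> int) \<times> (nat \<Rightarrow> real \<times> real)"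

definition edge_meas :: "nat \<Rightarrow> real \<Rightarrow> (nat \<times> nat \<Rightarrow> bool) measure" where
  "edge_meas n p = PiM {(i, j). i < j \<and> j < n} (\<lambda>_. measure_pmf (bernoulli_pmf p))"

definition weight_meas :: "nat \<Rightarrow> real measure \<Rightarrow> (nat \<Rightarrow> real) measure" where
  "weight_meas n D = PiM {..<n} (\<lambda>_. D)"

definition init_meas :: "nat \<Rightarrow> real \<Rightarrow> (nat \<Rightarrow> int) measure" where
  "init_meas n \<theta> = PiM {..<n}
     (\<lambda>_. measure_pmf (map_pmf (\<lambda>b. if b then 1 else 0) (bernoulli_pmf \<theta>)))"

definition clock_meas :: "(nat \<Rightarrow> real \<times> real) measure" where
  "clock_meas = PiM UNIV
     (\<lambda>_. density lborel (exponential_density 1) \<Otimes>\<^sub>M uniform_measure lborel {0..1})"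

definition SIR_space :: "nat \<Rightarrow> real \<Rightarrow> real measure \<Rightarrow> real \<Rightarrow> sir_outcome measure" where
  "SIR_space n p D \<theta> =
     edge_meas n p \<Otimes>\<^sub>M (weight_meas n D \<Otimes>\<^sub>M (init_meas n \<theta> \<Otimes>\<^sub>M clock_meas))"

definition adj :: "(nat \<times> nat \<Rightarrow> bool) \<Rightarrow> nat \<Rightarrow> nat \<Rightarrow> bool" where
  "adj G i j \<longleftrightarrow> i \<noteq> j \<and> G (min i j, max i j)"

definition sir_rate ::
  "real \<Rightarrow> nat \<Rightarrow> (nat \<times> nat \<Rightarrow> bool) \<Rightarrow> (nat \<Rightarrow> real) \<Rightarrow> (nat \<Rightarrow> int) \<Rightarrow> nat \<Rightarrow> real" where
  "sir_rate lam n G w x i =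
     (if x i = 0 then lam / real n * (\<Sum>j<n. if adj G j i \<and> x j = 1 then w i * w j else 0)
      else if x i = 1 then 1 else 0)"

definition sir_total ::
  "real \<Rightarrow> nat \<Rightarrow> (nat \<times> nat \<Rightarrow> bool) \<Rightarrow> (nat \<Rightarrow> real) \<Rightarrow> (nat \<Rightarrow> int) \<Rightarrow> real" where
  "sir_total lam n G w x = (\<Sum>i<n. sir_rate lam n G w x i)"

text \<open>Vertex selected by a uniform variable U, proportionally to the rates.\<close>
definition sir_choose ::
  "real \<Rightarrow> nat \<Rightarrow> (nat \<times> nat \<Rightarrow> bool) \<Rightarrow> (nat \<Rightarrow> real) \<Rightarrow> (nat \<Rightarrow> int) \<Rightarrow> real \<Rightarrow> nat" where
  "sir_choose lam n G w x U =
     (LEAST i. i < n \<and> U * sir_total lam n G w x < (\<Sum>k\<le>i. sir_rate lam n G w x k))"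

definition sir_flip :: "(nat \<Rightarrow> int) \<Rightarrow> nat \<Rightarrow> (nat \<Rightarrow> int)" where
  "sir_flip x i = x(i := (if x i = 0 then 1 else if x i = 1 then -1 else x i))"

fun sir_chain :: "real \<Rightarrow> nat \<Rightarrow> sir_outcome \<Rightarrow> nat \<Rightarrow> (nat \<Rightarrow> int)" where
  "sir_chain lam n (G, w, x0, c) 0 = x0"
| "sir_chain lam n (G, w, x0, c) (Suc k) =
     (let x = sir_chain lam n (G, w, x0, c) k in
      if sir_total lam n G w x > 0 then sir_flip x (sir_choose lam n G w x (snd (c k))) else x)"

fun sir_jump_time :: "real \<Rightarrow> nat \<Rightarrow> sir_outcome \<Rightarrow> nat \<Rightarrow> real" where
  "sir_jump_time lam n (G, w, x0, c) 0 = 0"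
| "sir_jump_time lam n (G, w, x0, c) (Suc k) =
     sir_jump_time lam n (G, w, x0, c) k
       + fst (c k) / sir_total lam n G w (sir_chain lam n (G, w, x0, c) k)"

definition sir_alive :: "real \<Rightarrow> nat \<Rightarrow> sir_outcome \<Rightarrow> nat \<Rightarrow> bool" where
  "sir_alive lam n \<omega> k \<longleftrightarrow>
     (\<forall>m<k. case \<omega> of (G, w, x0, c) \<Rightarrow> sir_total lam n G w (sir_chain lam n \<omega> m) > 0)"

definition sir_X :: "real \<Rightarrow> nat \<Rightarrow> sir_outcome \<Rightarrow> real \<Rightarrow> (nat \<Rightarrow> int)" where
  "sir_X lam n \<omega> t =
     sir_chain lam n \<omega> (Max {k. sir_alive lam n \<omega> k \<and> sir_jump_time lam n \<omega> k \<le> t})"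

definition sir_S :: "real \<Rightarrow> nat \<Rightarrow> sir_outcome \<Rightarrow> real \<Rightarrow> real \<Rightarrow> nat" where
  "sir_S lam n \<omega> t qj =
     card {i. i < n \<and> sir_X lam n \<omega> t i = 0 \<and> fst (snd \<omega>) i = qj}"

definition sir_I :: "real \<Rightarrow> nat \<Rightarrow> sir_outcome \<Rightarrow> real \<Rightarrow> real \<Rightarrow> nat" where
  "sir_I lam n \<omega> t ql =
     card {i. i < n \<and> sir_X lam n \<omega> t i = 1 \<and> fst (snd \<omega>) i = ql}"

definition sir_L :: "real \<Rightarrow> nat \<Rightarrow> sir_outcome \<Rightarrow> real \<Rightarrow> real \<Rightarrow> real \<Rightarrow> nat" where
  "sir_L lam n \<omega> t qj ql =
     card {(i, i'). i < n \<and> i' < n \<and> adj (fst \<omega>) i i'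
        \<and> sir_X lam n \<omega> t i = 0 \<and> fst (snd \<omega>) i = qj
        \<and> sir_X lam n \<omega> t i' = 1 \<and> fst (snd \<omega>) i' = ql}"

definition sir_dev :: "real \<Rightarrow> real \<Rightarrow> nat \<Rightarrow> real \<Rightarrow> real \<Rightarrow> real \<Rightarrow> sir_outcome \<Rightarrow> real" where
  "sir_dev lam p n qj ql t \<omega> =
     Sup ((\<lambda>u. \<bar>real (sir_L lam n \<omega> u qj ql)
               - p * real (sir_S lam n \<omega> u qj) * real (sir_I lam n \<omega> u ql)\<bar>) ` {0..t})
     / (real n)^2"

end

theory Submission
  imports Defs "HOL-Real_Asymp.Real_Asymp"
begin

text \<open>At any time u the deviation \<open>L - p S I\<close> only depends on the two disjoint vertex
  sets of susceptibles of weight \<open>q j\<close> and infectives of weight \<open>q l\<close>, so it suffices to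
  control the number of edges between all disjoint pairs of vertex sets at once. For a fixed pair \<open>(S, I)\<close> the edge count is a sum of
  \<open>|S| |I| \<le> n\<^sup>2\<close> independent Bernoulli(p) variables, so by Hoeffding it deviates from
  \<open>p |S| |I|\<close> by \<open>\<epsilon> n\<^sup>2\<close> with probability at most \<open>2 exp (-2 \<epsilon>\<^sup>2 n\<^sup>2)\<close>. A union bound
  over the at most \<open>4\<^sup>n\<close> pairs still tends to 0.\<close>

definition edge_slots :: "nat set \<Rightarrow> nat set \<Rightarrow> (nat \<times> nat) set" where
  "edge_slots S I = (\<lambda>(i, i'). (min i i', max i i')) ` (S \<times> I)"

lemma inj_on_edge_slot:
  "S \<inter> I = {} \<Longrightarrow> inj_on (\<lambda>(i, i'). (min i i', max i i')) (S \<times> I)"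
  unfolding inj_on_def by (auto simp: min_def max_def split: if_splits)

lemma card_edge_slots:
  "S \<inter> I = {} \<Longrightarrow> card (edge_slots S I) = card S * card I"
  unfolding edge_slots_def by (simp add: card_image inj_on_edge_slot card_cartesian_product)

lemma finite_edge_slots: "finite S \<Longrightarrow> finite I \<Longrightarrow> finite (edge_slots S I)"
  unfolding edge_slots_def by simp

lemma edge_slots_subset:
  assumes "S \<subseteq> {..<n}" "I \<subseteq> {..<n}" "S \<inter> I = {}"
  shows "edge_slots S I \<subseteq> {(i, j). i < j \<and> j < n}"
  using assms unfolding edge_slots_def by (fastforce simp: min_def max_def)

lemma card_adj_between:
  assumes "S \<inter> I = {}"
  shows "card {(i, i'). i \<in> S \<and> i' \<in> I \<and> adj G i i'} = card {k \<in> edge_slots S I. G k}"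
proof -
  let ?slot = "\<lambda>(i :: nat, i'). (min i i', max i i')"
  have "{(i, i'). i \<in> S \<and> i' \<in> I \<and> adj G i i'} = {x \<in> S \<times> I. G (?slot x)}"
    using assms by (auto simp: adj_def)
  moreover have "{k \<in> edge_slots S I. G k} = ?slot ` {x \<in> S \<times> I. G (?slot x)}"
    unfolding edge_slots_def by auto
  moreover have "inj_on ?slot {x \<in> S \<times> I. G (?slot x)}"
    by (rule inj_on_subset[OF inj_on_edge_slot[OF assms]]) blast
  ultimately show ?thesis by (simp add: card_image)
qed

lemma real_card_filter_eq_sum:
  "finite T \<Longrightarrow> real (card {k \<in> T. P k}) = (\<Sum>k\<in>T. if P k then 1 else 0)"
  by (simp add: sum.If_cases Int_def)

lemma borel_measurable_card_PiM_bernoulli: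
  assumes "T \<subseteq> E" "finite T"
  shows "(\<lambda>G. real (card {k \<in> T. G k}))
           \<in> borel_measurable (PiM E (\<lambda>_. measure_pmf (bernoulli_pmf p)))"
proof -
  have "(\<lambda>G. \<Sum>k\<in>T. if G k then 1 else (0 :: real))
          \<in> borel_measurable (PiM E (\<lambda>_. measure_pmf (bernoulli_pmf p)))"
  proof (intro borel_measurable_sum)
    fix k assume "k \<in> T"
    then have "(\<lambda>G. G k) \<in> measurable (PiM E (\<lambda>_. measure_pmf (bernoulli_pmf p)))
                                     (measure_pmf (bernoulli_pmf p))"
      using assms by (intro measurable_component_singleton) auto
    then show "(\<lambda>G. if G k then 1 else (0 :: real))
                 \<in> borel_measurable (PiM E (\<lambda>_. measure_pmf (bernoulli_pmf p)))"
      by (rule measurable_compose) simp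
  qed
  then show ?thesis using assms(2) by (simp add: real_card_filter_eq_sum)
qed

lemma PiM_bernoulli_count_Hoeffding:
  fixes T E :: "'a set" and p :: real
  defines "B \<equiv> PiM E (\<lambda>_. measure_pmf (bernoulli_pmf p))"
  assumes p: "0 \<le> p" "p \<le> 1" and T: "T \<subseteq> E" "finite T" "T \<noteq> {}" and "r \<ge> 0"
  shows "measure B {G \<in> space B. \<bar>real (card {k \<in> T. G k}) - real (card T) * p\<bar> \<ge> r}
           \<le> 2 * exp (-2 * r\<^sup>2 / real (card T))"
proof -
  define Mb where "Mb = measure_pmf (bernoulli_pmf p)"
  define X :: "'a \<Rightarrow> ('a \<Rightarrow> bool) \<Rightarrow> real" where "X = (\<lambda>k G. if G k then 1 else 0)"
  interpret B: prob_space B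
    unfolding B_def by (intro prob_space_PiM prob_space_measure_pmf)
  interpret PP: product_prob_space "\<lambda>_. Mb" E
    unfolding Mb_def by (intro product_prob_spaceI prob_space_measure_pmf)
  have component: "(\<lambda>G. G k) \<in> measurable B Mb" if "k \<in> E" for k
    using that unfolding B_def Mb_def by (rule measurable_component_singleton)
  have distr_component: "distr B Mb (\<lambda>G. G k) = Mb" if "k \<in> E" for k
    using that unfolding B_def Mb_def by (subst distr_PiM_component) (auto simp: prob_space_measure_pmf)
  have "B.indep_vars (\<lambda>_. Mb) (\<lambda>k G. G k) T"
  proof (subst B.indep_vars_iff_distr_eq_PiM')
    have "distr B (PiM T (\<lambda>_. Mb)) (\<lambda>G. \<lambda>k\<in>T. G k) = PiM T (\<lambda>_. Mb)"
      unfolding B_def Mb_def using PP.distr_PiM_restrict_finite[OF T(2,1)]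
      by (simp add: Mb_def restrict_def)
    also have "\<dots> = PiM T (\<lambda>k. distr B Mb (\<lambda>G. G k))"
      using T(1) distr_component by (intro PiM_cong) auto
    finally show "distr B (PiM T (\<lambda>_. Mb)) (\<lambda>G. \<lambda>k\<in>T. G k) = PiM T (\<lambda>k. distr B Mb (\<lambda>G. G k))" .
  qed (use T component in auto)
  then have indep: "B.indep_vars (\<lambda>_. borel) X T"
    unfolding X_def
    by (rule B.indep_vars_compose2[where Y = "\<lambda>_ b. if b then 1 else (0 :: real)"])
       (simp add: Mb_def)
  have "B.expectation (X k) = p" if "k \<in> T" for k
  proof -
    have "B.expectation (X k) = integral\<^sup>L (distr B Mb (\<lambda>G. G k)) (\<lambda>b. if b then 1 else (0 :: real))"
      unfolding X_def using component[of k] that T(1) by (subst integral_distr) (auto simp: Mb_def)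
    also have "\<dots> = p"
      using distr_component[OF subsetD[OF T(1) that]] p by (simp add: Mb_def)
    finally show ?thesis .
  qed
  then have mean: "(\<Sum>k\<in>T. B.expectation (X k)) = real (card T) * p" by simp
  interpret H: Hoeffding_ineq B T X "\<lambda>_. 0" "\<lambda>_. 1" "\<Sum>k\<in>T. B.expectation (X k)"
    by unfold_locales (use T(2) indep in \<open>auto simp: X_def\<close>)
  have "(\<Sum>k\<in>T. ((1 :: real) - 0)\<^sup>2) = real (card T)" by simp
  moreover have "real (card T) > 0" using T by (simp add: card_gt_0_iff)
  ultimately show ?thesis
    using H.Hoeffding_ineq_abs_ge[OF \<open>r \<ge> 0\<close>, unfolded mean] T(2)
    by (simp add: X_def real_card_filter_eq_sum)
qed

definition disjoint_vertex_pairs :: "nat \<Rightarrow> (nat set \<times> nat set) set" where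
  "disjoint_vertex_pairs n = {(S, I). S \<subseteq> {..<n} \<and> I \<subseteq> {..<n} \<and> S \<inter> I = {}}"

lemma finite_disjoint_vertex_pairs: "finite (disjoint_vertex_pairs n)"
  and card_disjoint_vertex_pairs: "card (disjoint_vertex_pairs n) \<le> 4 ^ n"
proof -
  have sub: "disjoint_vertex_pairs n \<subseteq> Pow {..<n} \<times> Pow {..<n}"
    unfolding disjoint_vertex_pairs_def by auto
  then show "finite (disjoint_vertex_pairs n)" by (rule finite_subset) simp
  have "card (disjoint_vertex_pairs n) \<le> card (Pow {..<n} \<times> Pow {..<n})"
    by (rule card_mono[OF _ sub]) simp
  also have "\<dots> = 4 ^ n"
    by (simp add: card_cartesian_product card_Pow power_mult_distrib[symmetric])
  finally show "card (disjoint_vertex_pairs n) \<le> 4 ^ n" .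
qed

definition cross_edge_deviation_event ::
  "nat \<Rightarrow> real \<Rightarrow> real \<Rightarrow> nat set \<Rightarrow> nat set \<Rightarrow> (nat \<times> nat \<Rightarrow> bool) set" where
  "cross_edge_deviation_event n p \<epsilon> S I = {G \<in> space (edge_meas n p).
     \<bar>real (card {k \<in> edge_slots S I. G k}) - real (card (edge_slots S I)) * p\<bar> \<ge> \<epsilon> * real n ^ 2}"

definition deviant_graphs :: "nat \<Rightarrow> real \<Rightarrow> real \<Rightarrow> (nat \<times> nat \<Rightarrow> bool) set" where
  "deviant_graphs n p \<epsilon> =
     (\<Union>(S, I)\<in>disjoint_vertex_pairs n. cross_edge_deviation_event n p \<epsilon> S I)"

lemma cross_edge_deviation_event_sets:
  assumes "(S, I) \<in> disjoint_vertex_pairs n"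
  shows "cross_edge_deviation_event n p \<epsilon> S I \<in> sets (edge_meas n p)"
proof -
  have "edge_slots S I \<subseteq> {(i, j). i < j \<and> j < n}" "finite (edge_slots S I)"
    using assms edge_slots_subset finite_subset[of _ "{..<n}"]
    by (auto simp: disjoint_vertex_pairs_def intro!: finite_edge_slots)
  note [measurable] = borel_measurable_card_PiM_bernoulli[OF this, of p, folded edge_meas_def]
  show ?thesis unfolding cross_edge_deviation_event_def by measurable
qed

lemma deviant_graphs_sets: "deviant_graphs n p \<epsilon> \<in> sets (edge_meas n p)"
  unfolding deviant_graphs_def
  using finite_disjoint_vertex_pairs cross_edge_deviation_event_sets by auto

lemma measure_cross_edge_deviation_event:
  assumes p: "0 \<le> p" "p \<le> 1" and "\<epsilon> > 0" "n > 0" and SI: "(S, I) \<in> disjoint_vertex_pairs n"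
  shows "measure (edge_meas n p) (cross_edge_deviation_event n p \<epsilon> S I)
           \<le> 2 * exp (-2 * \<epsilon>\<^sup>2 * real n ^ 2)"
proof (cases "edge_slots S I = {}")
  case True
  with \<open>\<epsilon> > 0\<close> \<open>n > 0\<close> have "cross_edge_deviation_event n p \<epsilon> S I = {}"
    unfolding cross_edge_deviation_event_def by (auto simp: not_le)
  then show ?thesis by simp
next
  case False
  let ?c = "real (card (edge_slots S I))"
  have S: "S \<subseteq> {..<n}" and I: "I \<subseteq> {..<n}" and disj: "S \<inter> I = {}"
    using SI by (auto simp: disjoint_vertex_pairs_def)
  then have fin: "finite (edge_slots S I)"
    by (meson finite_edge_slots finite_lessThan finite_subset)
  have "card S * card I \<le> n * n"
    using S I by (intro mult_le_mono) (auto dest: card_mono[rotated])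
  then have "?c \<le> real n ^ 2"
    using card_edge_slots[OF disj] by (simp add: power2_eq_square flip: of_nat_mult)
  then have "2 * \<epsilon>\<^sup>2 * real n ^ 2 * ?c \<le> 2 * \<epsilon>\<^sup>2 * real n ^ 2 * real n ^ 2"
    by (intro mult_left_mono) auto
  moreover have "?c > 0" using False fin by (simp add: card_gt_0_iff)
  ultimately have "2 * \<epsilon>\<^sup>2 * real n ^ 2 \<le> 2 * (\<epsilon> * real n ^ 2)\<^sup>2 / ?c"
    by (simp add: field_simps power2_eq_square)
  then have "exp (-2 * (\<epsilon> * real n ^ 2)\<^sup>2 / ?c) \<le> exp (-2 * \<epsilon>\<^sup>2 * real n ^ 2)"
    by simp
  moreover have "measure (edge_meas n p) (cross_edge_deviation_event n p \<epsilon> S I)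
                   \<le> 2 * exp (-2 * (\<epsilon> * real n ^ 2)\<^sup>2 / ?c)"
    unfolding cross_edge_deviation_event_def edge_meas_def
    using \<open>\<epsilon> > 0\<close> p edge_slots_subset[OF S I disj] fin False
    by (intro PiM_bernoulli_count_Hoeffding) auto
  ultimately show ?thesis by linarith
qed

lemma prob_space_edge_meas: "prob_space (edge_meas n p)"
  unfolding edge_meas_def by (intro prob_space_PiM prob_space_measure_pmf)

lemma measure_deviant_graphs:
  assumes "0 \<le> p" "p \<le> 1" "\<epsilon> > 0" "n > 0"
  shows "measure (edge_meas n p) (deviant_graphs n p \<epsilon>) \<le> 4 ^ n * (2 * exp (-2 * \<epsilon>\<^sup>2 * real n ^ 2))"
proof -
  interpret prob_space "edge_meas n p" by (rule prob_space_edge_meas)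
  have "measure (edge_meas n p) (deviant_graphs n p \<epsilon>)
          \<le> (\<Sum>x\<in>disjoint_vertex_pairs n.
                measure (edge_meas n p) (case_prod (cross_edge_deviation_event n p \<epsilon>) x))"
    unfolding deviant_graphs_def using finite_disjoint_vertex_pairs cross_edge_deviation_event_sets
    by (intro measure_subadditive_finite) auto
  also have "\<dots> \<le> (\<Sum>x\<in>disjoint_vertex_pairs n. 2 * exp (-2 * \<epsilon>\<^sup>2 * real n ^ 2))"
    by (intro sum_mono) (use measure_cross_edge_deviation_event[OF assms] in force)
  also have "\<dots> \<le> 4 ^ n * (2 * exp (-2 * \<epsilon>\<^sup>2 * real n ^ 2))"
    using card_disjoint_vertex_pairs[of n]
    by (simp del: of_nat_le_iff add: mult_right_mono flip: of_nat_le_iff)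
  finally show ?thesis .
qed

lemma sir_dev_le_if_not_deviant:
  assumes G: "fst \<omega> \<in> space (edge_meas n p)" "fst \<omega> \<notin> deviant_graphs n p \<epsilon>"
    and "n > 0" "t \<ge> 0"
  shows "sir_dev lam p n qj ql t \<omega> \<le> \<epsilon>"
proof -
  let ?dev = "\<lambda>u. \<bar>real (sir_L lam n \<omega> u qj ql)
                  - p * real (sir_S lam n \<omega> u qj) * real (sir_I lam n \<omega> u ql)\<bar>"
  have "?dev u < \<epsilon> * real n ^ 2" for u
  proof -
    define S where "S = {i. i < n \<and> sir_X lam n \<omega> u i = 0 \<and> fst (snd \<omega>) i = qj}"
    define I where "I = {i. i < n \<and> sir_X lam n \<omega> u i = 1 \<and> fst (snd \<omega>) i = ql}"
    have SI: "(S, I) \<in> disjoint_vertex_pairs n"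
      unfolding S_def I_def disjoint_vertex_pairs_def by auto
    then have disj: "S \<inter> I = {}" by (simp add: disjoint_vertex_pairs_def)
    have "sir_L lam n \<omega> u qj ql = card {(i, i'). i \<in> S \<and> i' \<in> I \<and> adj (fst \<omega>) i i'}"
      unfolding sir_L_def S_def I_def by (rule arg_cong[where f = card]) auto
    also have "\<dots> = card {k \<in> edge_slots S I. fst \<omega> k}" by (rule card_adj_between[OF disj])
    finally have L: "sir_L lam n \<omega> u qj ql = card {k \<in> edge_slots S I. fst \<omega> k}" .
    have S: "sir_S lam n \<omega> u qj = card S" and I: "sir_I lam n \<omega> u ql = card I"
      unfolding sir_S_def sir_I_def S_def I_def by simp_all
    have "fst \<omega> \<notin> cross_edge_deviation_event n p \<epsilon> S I"
      using G(2) SI unfolding deviant_graphs_def by blast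
    then show ?thesis
      using G(1) unfolding cross_edge_deviation_event_def L S I card_edge_slots[OF disj]
      by (simp add: algebra_simps)
  qed
  then have "Sup (?dev ` {0..t}) \<le> \<epsilon> * real n ^ 2"
    using \<open>t \<ge> 0\<close> by (intro cSup_least) (auto intro: less_imp_le)
  then show ?thesis unfolding sir_dev_def using \<open>n > 0\<close> by (simp add: divide_le_eq)
qed

lemma measure_pair_measure_Times_space:
  assumes "prob_space R" "A \<in> sets M"
  shows "measure (M \<Otimes>\<^sub>M R) (A \<times> space R) = measure M A"
proof -
  interpret R: prob_space R by fact
  show ?thesis
    using R.emeasure_pair_measure_Times[OF assms(2) sets.top]
    by (simp add: measure_def R.emeasure_space_1)
qed

lemma sir_dev_exceeds_contained_in_small_event:
  assumes "prob_space D" "0 \<le> p" "p \<le> 1" "\<epsilon> > 0" "n > 0" "t \<ge> 0"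
  shows "\<exists>A \<in> sets (SIR_space n p D \<theta>).
           {\<omega> \<in> space (SIR_space n p D \<theta>). sir_dev lam p n qj ql t \<omega> > \<epsilon>} \<subseteq> A
           \<and> measure (SIR_space n p D \<theta>) A \<le> 4 ^ n * (2 * exp (-2 * \<epsilon>\<^sup>2 * real n ^ 2))"
proof -
  define R where "R = weight_meas n D \<Otimes>\<^sub>M (init_meas n \<theta> \<Otimes>\<^sub>M clock_meas)"
  have SIR: "SIR_space n p D \<theta> = edge_meas n p \<Otimes>\<^sub>M R" unfolding SIR_space_def R_def ..
  have "prob_space R"
    unfolding R_def weight_meas_def init_meas_def clock_meas_def using \<open>prob_space D\<close>
    by (intro prob_space_pair prob_space_PiM prob_space_measure_pmf
        prob_space_exponential_density prob_space_uniform_measure) auto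
  then have "measure (SIR_space n p D \<theta>) (deviant_graphs n p \<epsilon> \<times> space R)
               = measure (edge_meas n p) (deviant_graphs n p \<epsilon>)"
    unfolding SIR by (rule measure_pair_measure_Times_space[OF _ deviant_graphs_sets])
  also have "\<dots> \<le> 4 ^ n * (2 * exp (-2 * \<epsilon>\<^sup>2 * real n ^ 2))"
    using measure_deviant_graphs assms by simp
  finally have "measure (SIR_space n p D \<theta>) (deviant_graphs n p \<epsilon> \<times> space R)
                  \<le> 4 ^ n * (2 * exp (-2 * \<epsilon>\<^sup>2 * real n ^ 2))" .
  moreover have "{\<omega> \<in> space (SIR_space n p D \<theta>). sir_dev lam p n qj ql t \<omega> > \<epsilon>}
                   \<subseteq> deviant_graphs n p \<epsilon> \<times> space R"
  proof
    fix \<omega> assume \<omega>: "\<omega> \<in> {\<omega> \<in> space (SIR_space n p D \<theta>). sir_dev lam p n qj ql t \<omega> > \<epsilon>}"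
    then have "fst \<omega> \<in> space (edge_meas n p)" "snd \<omega> \<in> space R"
      by (auto simp: SIR space_pair_measure)
    with \<omega> sir_dev_le_if_not_deviant[of \<omega> n p \<epsilon> t lam qj ql] assms(5,6)
    show "\<omega> \<in> deviant_graphs n p \<epsilon> \<times> space R" by (cases \<omega>) force
  qed
  moreover have "deviant_graphs n p \<epsilon> \<times> space R \<in> sets (SIR_space n p D \<theta>)"
    unfolding SIR using deviant_graphs_sets by (intro pair_measureI) auto
  ultimately show ?thesis by blast
qed

theorem corollary3p3:
  fixes lam p \<theta> M1 t :: real and K j l :: nat and q \<mu> :: "nat \<Rightarrow> real" and D :: "real measure"
  assumes "lam > 0" and "0 < p" and "p < 1" and "0 < \<theta>" and "\<theta> < 1"
    and "\<forall>i<K. 0 \<le> q i \<and> q i \<le> M1" and "inj_on q {..<K}"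
    and "\<forall>i<K. \<mu> i > 0" and "(\<Sum>i<K. \<mu> i) = 1"
    and "prob_space D" and "sets D = sets borel" and "\<forall>i<K. measure D {q i} = \<mu> i"
    and "j < K" and "l < K" and "t \<ge> 0"
  shows "\<forall>\<epsilon>>0. \<forall>\<delta>>0. \<exists>N. \<forall>n\<ge>N. \<exists>A \<in> sets (SIR_space n p D \<theta>).
           {\<omega> \<in> space (SIR_space n p D \<theta>). sir_dev lam p n (q j) (q l) t \<omega> > \<epsilon>} \<subseteq> A
           \<and> measure (SIR_space n p D \<theta>) A < \<delta>"
proof (intro allI impI)
  fix \<epsilon> \<delta> :: real assume "\<epsilon> > 0" "\<delta> > 0"
  have "(\<lambda>n::nat. 4 ^ n * (2 * exp (-2 * \<epsilon>\<^sup>2 * real n ^ 2))) \<longlonglongrightarrow> 0"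
    using \<open>\<epsilon> > 0\<close> by real_asymp
  with \<open>\<delta> > 0\<close> obtain N where N: "\<forall>n\<ge>N. 4 ^ n * (2 * exp (-2 * \<epsilon>\<^sup>2 * real n ^ 2)) < \<delta>"
    unfolding lim_sequentially by (auto simp: dist_real_def)
  have "\<exists>A \<in> sets (SIR_space n p D \<theta>).
           {\<omega> \<in> space (SIR_space n p D \<theta>). sir_dev lam p n (q j) (q l) t \<omega> > \<epsilon>} \<subseteq> A
           \<and> measure (SIR_space n p D \<theta>) A < \<delta>" if "n \<ge> Suc N" for n
  proof -
    from that have "n > 0" and "4 ^ n * (2 * exp (-2 * \<epsilon>\<^sup>2 * real n ^ 2)) < \<delta>" using N by auto
    with sir_dev_exceeds_contained_in_small_event[of D p \<epsilon> n t \<theta> lam "q j" "q l"]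
      assms(2,3,10,15) \<open>\<epsilon> > 0\<close> show ?thesis by (meson le_less_trans less_imp_le)
  qed
  then show "\<exists>N. \<forall>n\<ge>N. \<exists>A \<in> sets (SIR_space n p D \<theta>).
           {\<omega> \<in> space (SIR_space n p D \<theta>). sir_dev lam p n (q j) (q l) t \<omega> > \<epsilon>} \<subseteq> A
           \<and> measure (SIR_space n p D \<theta>) A < \<delta>" by blast
qed

end
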